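(* Let $k$ be a field, $A,B$ abelian groups, $R$ an $A$-graded and $S$ a $B$-graded finite-dimensional Frobenius $k$-algebra with forms $\langle-,-\rangle_R$, $\langle-,-\rangle_S$ and Nakayama automorphisms $\nu_R,\nu_S$, and $t:A\otimes B\to k^\times$ a bicharacter. Suppose there exist $\sigma_R\in A$, $\sigma_S\in B$ such that for homogeneous $r,r'\in R$, $\langle r,r'\rangle_R\ne0$ implies $|r|+|r'|+\sigma_R=0$, and for homogeneous $s,s'\in S$, $\langle s,s'\rangle_S\neq0$ implies $|s|+|s'|+\sigma_S=0$. Then: (1) $\nu_R$ and $\nu_S$ preserve the gradings; (2) the map $R\otimes^tS\to D(R\otimes^tS)[(\sigma_R,\sigma_S)]$, $x\mapsto\langle x,-\rangle$, is graded (of degree zero), where $\langle-,-\rangle$ is the form $\langle r\otimes s,r'\otimes s'\rangle=t(|r'|,|s|)\langle r,r'\rangle_R\langle s,s'\rangle_S$ on $R\otimes^tS$; equivalently, for homogeneous $r,a\in R$, $s,b\in S$, $\langle r\otimes s,a\otimes b\rangle\neq0$ implies $(|a|,|b|)=(-|r|-\sigma_R,-|s|-\sigma_S)$.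
   Context: $R\otimes^tS$ is $R\otimes S$ with product $(r\otimes s)(r'\otimes s')=t(|r'|,|s|)rr'\otimes ss'$; it is $A\oplus B$-graded. The Nakayama automorphism $\nu$ of a Frobenius algebra is defined by $\langle a,x\rangle=\langle x,\nu(a)\rangle$ for all $x$. For a $G$-graded space $V$, $D(V)=\operatorname{Hom}_k(V,k)$ is graded by $D(V)_g=\{\phi:\phi(v)=0$ for $v\notin V^{-g}\}$, and $V[\sigma]^g=V^{g+\sigma}$. *)

theory Defs
  imports Complex_Main
begin

definition fd_algebra :: "('k::field \<Rightarrow> 'r::ring_1 \<Rightarrow> 'r) \<Rightarrow> bool" where
  "fd_algebra sc \<longleftrightarrow> vector_space sc
     \<and> (\<forall>c x y. sc c (x * y) = sc c x * y \<and> sc c (x * y) = x * sc c y)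
     \<and> (\<exists>B. finite B \<and> module.span sc B = UNIV)"

definition graded_algebra ::
  "('k::field \<Rightarrow> 'r::ring_1 \<Rightarrow> 'r) \<Rightarrow> ('g::ab_group_add \<Rightarrow> 'r set) \<Rightarrow> bool" where
  "graded_algebra sc Gr \<longleftrightarrow>
     (\<forall>g. module.subspace sc (Gr g))
     \<and> (\<forall>g h x y. x \<in> Gr g \<longrightarrow> y \<in> Gr h \<longrightarrow> x * y \<in> Gr (g + h))
     \<and> 1 \<in> Gr 0
     \<and> (\<forall>x. \<exists>!f. finite {g. f g \<noteq> 0} \<and> (\<forall>g. f g \<in> Gr g)
                  \<and> x = (\<Sum>g\<in>{g. f g \<noteq> 0}. f g))"

definition frobenius_form ::
  "('k::field \<Rightarrow> 'r::ring_1 \<Rightarrow> 'r) \<Rightarrow> ('r \<Rightarrow> 'r \<Rightarrow> 'k) \<Rightarrow> bool" where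
  "frobenius_form sc form \<longleftrightarrow>
     (\<forall>x y z. form (x + y) z = form x z + form y z \<and> form x (y + z) = form x y + form x z)
     \<and> (\<forall>c x y. form (sc c x) y = c * form x y \<and> form x (sc c y) = c * form x y)
     \<and> (\<forall>x y z. form (x * y) z = form x (y * z))
     \<and> (\<forall>x. (\<forall>y. form x y = 0) \<longrightarrow> x = 0)
     \<and> (\<forall>y. (\<forall>x. form x y = 0) \<longrightarrow> y = 0)"

definition frobenius_algebra ::
  "('k::field \<Rightarrow> 'r::ring_1 \<Rightarrow> 'r) \<Rightarrow> ('r \<Rightarrow> 'r \<Rightarrow> 'k) \<Rightarrow> bool" where
  "frobenius_algebra sc form \<longleftrightarrow> fd_algebra sc \<and> frobenius_form sc form"

definition is_nakayama :: "('r \<Rightarrow> 'r \<Rightarrow> 'k) \<Rightarrow> ('r \<Rightarrow> 'r) \<Rightarrow> bool" where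
  "is_nakayama form nu \<longleftrightarrow> (\<forall>a x. form a x = form x (nu a))"

text \<open>A bicharacter t : A x B \<rightarrow> k^\<times> (equivalently a homomorphism A \<otimes> B \<rightarrow> k^\<times>).\<close>
definition bicharacter :: "('a::ab_group_add \<Rightarrow> 'b::ab_group_add \<Rightarrow> 'k::field) \<Rightarrow> bool" where
  "bicharacter t \<longleftrightarrow> (\<forall>a b. t a b \<noteq> 0)
     \<and> (\<forall>a a' b. t (a + a') b = t a b * t a' b)
     \<and> (\<forall>a b b'. t a (b + b') = t a b * t a b')"

text \<open>The form on R \<otimes>^t S evaluated on pure tensors r \<otimes> s and r' \<otimes> s' with
  r' homogeneous of degree dr' and s homogeneous of degree ds:
  <r\<otimes>s, r'\<otimes>s'> = t(|r'|,|s|) <r,r'>_R <s,s'>_S.\<close>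
definition tensor_form ::
  "('a \<Rightarrow> 'b \<Rightarrow> 'k::field) \<Rightarrow> ('r \<Rightarrow> 'r \<Rightarrow> 'k) \<Rightarrow> ('s \<Rightarrow> 's \<Rightarrow> 'k)
    \<Rightarrow> 'r \<Rightarrow> 's \<Rightarrow> 'b \<Rightarrow> 'r \<Rightarrow> 'a \<Rightarrow> 's \<Rightarrow> 'k" where
  "tensor_form t formR formS r s ds r' dr' s' = t dr' ds * formR r r' * formS s s'"

end

theory Submission
  imports Defs
begin

text \<open>Pairing a homogeneous element y of degree g' against any v only sees the component
  of v in degree -g'-\<sigma>. If x has degree g, then by the Nakayama property the functional
  <-, \<nu> x> = <x, -> vanishes on every degree g' with g + g' + \<sigma> \<noteq> 0, so every component of
  \<nu> x outside degree g pairs trivially with all homogeneous elements and is zero by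
  nondegeneracy. The statement about R \<otimes>^t S is immediate, since the tensor form is
  a product whose two factor forms must both be nonzero.\<close>

lemma degree_partner_iff:
  fixes g g' \<sigma> :: "'a::ab_group_add"
  shows "g + g' + \<sigma> = 0 \<longleftrightarrow> g' = - g - \<sigma>"
proof -
  have "g' = - g - \<sigma> \<longleftrightarrow> g' + \<sigma> = - g"
    by (rule eq_diff_eq)
  also have "\<dots> \<longleftrightarrow> g + (g' + \<sigma>) = 0"
    by (metis neg_eq_iff_add_eq_0 eq_commute)
  finally show ?thesis
    by (simp add: add.assoc)
qed

lemma graded_algebra_decomposition:
  assumes "graded_algebra sc G"
  obtains f where "finite {g. f g \<noteq> 0}" "\<And>g. f g \<in> G g" "x = (\<Sum>g\<in>{g. f g \<noteq> 0}. f g)"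
proof -
  have "\<exists>!f. finite {g. f g \<noteq> 0} \<and> (\<forall>g. f g \<in> G g) \<and> x = (\<Sum>g\<in>{g. f g \<noteq> 0}. f g)"
    using assms by (simp add: graded_algebra_def)
  then show thesis
    using that by blast
qed

lemma frobenius_algebra_form:
  assumes "frobenius_algebra sc form"
  shows "frobenius_form sc form"
  using assms by (simp add: frobenius_algebra_def)

lemma frobenius_form_additive_left:
  assumes "frobenius_form sc form"
  shows "additive (\<lambda>x. form x z)"
  using assms by (simp add: frobenius_form_def additive_def)

lemma frobenius_form_additive_right:
  assumes "frobenius_form sc form"
  shows "additive (form x)"
  using assms by (simp add: frobenius_form_def additive_def)

lemma frobenius_form_nondegenerate_on_homogeneous:
  assumes form: "frobenius_form sc form"
    and graded: "graded_algebra sc G"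
    and orth: "\<And>g y. y \<in> G g \<Longrightarrow> form y v = 0"
  shows "v = 0"
proof -
  have "form y v = 0" for y
  proof -
    obtain f where fin: "finite {g. f g \<noteq> 0}" and hom: "\<And>g. f g \<in> G g"
      and y: "y = (\<Sum>g\<in>{g. f g \<noteq> 0}. f g)"
      using graded_algebra_decomposition[OF graded, of y] by blast
    have "form y v = (\<Sum>g\<in>{g. f g \<noteq> 0}. form (f g) v)"
      unfolding y by (rule additive.sum[OF frobenius_form_additive_left[OF form]])
    also have "\<dots> = 0"
      using orth[OF hom] by simp
    finally show ?thesis .
  qed
  then show ?thesis
    using form by (simp add: frobenius_form_def)
qed

lemma form_homogeneous_selects_component:
  fixes G :: "'a::ab_group_add \<Rightarrow> 'r::ab_group_add set"
  assumes additive: "additive (form y)"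
    and deg: "\<And>g g' r r'. r \<in> G g \<Longrightarrow> r' \<in> G g' \<Longrightarrow> form r r' \<noteq> 0 \<Longrightarrow> g + g' + \<sigma> = 0"
    and y: "y \<in> G g'"
    and fin: "finite {h. f h \<noteq> 0}"
    and hom: "\<And>h. f h \<in> G h"
    and h0: "g' + h0 + \<sigma> = 0"
  shows "form y (\<Sum>h\<in>{h. f h \<noteq> 0}. f h) = form y (f h0)"
proof -
  have other_components: "form y (f h) = 0" if "h \<noteq> h0" for h
  proof -
    have "g' + h + \<sigma> \<noteq> 0"
      using that h0 by (simp add: degree_partner_iff)
    then show ?thesis
      using deg[OF y hom] by blast
  qed
  have "form y (\<Sum>h\<in>{h. f h \<noteq> 0}. f h) = (\<Sum>h\<in>{h. f h \<noteq> 0}. form y (f h))"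
    by (rule additive.sum[OF additive])
  also have "\<dots> = (\<Sum>h\<in>{h. f h \<noteq> 0}. if h = h0 then form y (f h0) else 0)"
    using other_components by (intro sum.cong) auto
  also have "\<dots> = form y (f h0)"
    using fin additive.zero[OF additive] by (simp add: sum.delta)
  finally show ?thesis .
qed

lemma nakayama_preserves_degree:
  assumes form: "frobenius_form sc form"
    and graded: "graded_algebra sc G"
    and nak: "is_nakayama form nu"
    and deg: "\<And>g g' r r'. r \<in> G g \<Longrightarrow> r' \<in> G g' \<Longrightarrow> form r r' \<noteq> 0 \<Longrightarrow> g + g' + \<sigma> = 0"
    and x: "x \<in> G g"
  shows "nu x \<in> G g"
proof -
  obtain f where fin: "finite {h. f h \<noteq> 0}" and hom: "\<And>h. f h \<in> G h"
    and nu_x: "nu x = (\<Sum>h\<in>{h. f h \<noteq> 0}. f h)"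
    using graded_algebra_decomposition[OF graded, of "nu x"] by blast
  have off_degree_zero: "f h0 = 0" if "h0 \<noteq> g" for h0
  proof (rule frobenius_form_nondegenerate_on_homogeneous[OF form graded])
    fix g' y assume y: "y \<in> G g'"
    show "form y (f h0) = 0"
    proof (cases "g' + h0 + \<sigma> = 0")
      case False
      then show ?thesis
        using deg[OF y hom] by blast
    next
      case True
      have "g' + g + \<sigma> \<noteq> 0"
        using True \<open>h0 \<noteq> g\<close> by (simp add: degree_partner_iff)
      then have "g + g' + \<sigma> \<noteq> 0"
        by (simp add: add.commute)
      then have "form x y = 0"
        using deg[OF x y] by blast
      moreover have "form y (nu x) = form y (f h0)"
        unfolding nu_x using frobenius_form_additive_right[OF form] deg y fin hom True
        by (rule form_homogeneous_selects_component)
      ultimately show ?thesis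
        using nak by (simp add: is_nakayama_def)
    qed
  qed
  have "nu x = (\<Sum>h\<in>{g}. f h)"
    unfolding nu_x using off_degree_zero by (intro sum.mono_neutral_left) auto
  then show ?thesis
    using hom by simp
qed

theorem mainTheorem4:
  fixes scR :: "'k::field \<Rightarrow> 'r::ring_1 \<Rightarrow> 'r"
    and scS :: "'k \<Rightarrow> 's::ring_1 \<Rightarrow> 's"
    and RG :: "'a::ab_group_add \<Rightarrow> 'r set"
    and SG :: "'b::ab_group_add \<Rightarrow> 's set"
    and formR :: "'r \<Rightarrow> 'r \<Rightarrow> 'k"
    and formS :: "'s \<Rightarrow> 's \<Rightarrow> 'k"
    and nuR :: "'r \<Rightarrow> 'r"
    and nuS :: "'s \<Rightarrow> 's"
    and t :: "'a \<Rightarrow> 'b \<Rightarrow> 'k"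
    and \<sigma>R :: 'a and \<sigma>S :: 'b
  assumes frobR: "frobenius_algebra scR formR"
    and gradedR: "graded_algebra scR RG"
    and frobS: "frobenius_algebra scS formS"
    and gradedS: "graded_algebra scS SG"
    and nakR: "is_nakayama formR nuR"
    and nakS: "is_nakayama formS nuS"
    and bichar: "bicharacter t"
    and degR: "\<And>g g' r r'. r \<in> RG g \<Longrightarrow> r' \<in> RG g' \<Longrightarrow> formR r r' \<noteq> 0
                 \<Longrightarrow> g + g' + \<sigma>R = 0"
    and degS: "\<And>h h' s s'. s \<in> SG h \<Longrightarrow> s' \<in> SG h' \<Longrightarrow> formS s s' \<noteq> 0
                 \<Longrightarrow> h + h' + \<sigma>S = 0"
  shows "(\<forall>g x. x \<in> RG g \<longrightarrow> nuR x \<in> RG g)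
       \<and> (\<forall>h y. y \<in> SG h \<longrightarrow> nuS y \<in> SG h)
       \<and> (\<forall>g h g' h' r s a b. r \<in> RG g \<longrightarrow> s \<in> SG h \<longrightarrow> a \<in> RG g' \<longrightarrow> b \<in> SG h'
            \<longrightarrow> tensor_form t formR formS r s h a g' b \<noteq> 0
            \<longrightarrow> (g', h') = (- g - \<sigma>R, - h - \<sigma>S))"
proof (intro conjI allI impI)
  show "nuR x \<in> RG g" if "x \<in> RG g" for g x
    using frobenius_algebra_form[OF frobR] gradedR nakR degR that
    by (rule nakayama_preserves_degree)
  show "nuS y \<in> SG h" if "y \<in> SG h" for h y
    using frobenius_algebra_form[OF frobS] gradedS nakS degS that
    by (rule nakayama_preserves_degree)
next
  fix g h g' h' r s a b
  assume r: "r \<in> RG g" and s: "s \<in> SG h" and a: "a \<in> RG g'" and b: "b \<in> SG h'"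
    and nonzero: "tensor_form t formR formS r s h a g' b \<noteq> 0"
  have "formR r a \<noteq> 0" "formS s b \<noteq> 0"
    using nonzero by (auto simp: tensor_form_def)
  then show "(g', h') = (- g - \<sigma>R, - h - \<sigma>S)"
    using degR[OF r a] degS[OF s b] by (simp add: degree_partner_iff)
qed

end
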